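(* Let $M\ge1$ and $\mathbf a\in\mathcal A_M$. Then $\mathbf a$ has a unique decomposition into irreducible words. That is, there exist a unique $k\in\mathbb N$ and a unique $k$-tuple $(\mathbf c_1,\dots,\mathbf c_k)$ with the following properties: - $\mathbf c_1\in\mathcal A_M$; - $\mathbf c_2,\dots,\mathbf c_k\in\mathcal A_1$; - each $\mathbf c_i$ is irreducible; - $\mathbf a=\mathbf c_1\circ\mathbf c_2\circ\cdots\circ\mathbf c_k$.
   Context: Order and word operations. Words over $\{0,\dots,M\}$ are ordered lexicographically, with $\mathbf c\prec\mathbf d$ iff $\mathbf c0^\infty\prec\mathbf d0^\infty$. For a word $c_1\dots c_k$: - if $c_k<M$, then $c_1\dots c_k^+=c_1\dots c_{k-1}(c_k+1)$; - $\overline{c_1\dots c_k}=(M-c_1)\dots(M-c_k)$. Fundamental words. A word $a_1\dots a_m$ ($m\ge2$) is fundamental if $\overline{a_1\dots a_{m-i}}\preceq a_{i+1}\dots a_m\prec a_1\dots a_{m-i}$ for $1\le i<m$. When $M\ge2$, a letter $a_1$ is fundamental if $M-a_1\le a_1<M$. $\mathcal A_M$ is the set of fundamental words, and $\mathcal A_1$ is the case $M=1$ (such words begin with $1$). The graph. For $\mathbf a\in\mathcal A_M$, let $G$ have vertices Start, $A$, $B$ and edges - $e_0$: Start$\to A$, - $e_1$: $A\to B$, - $e_2$: $B\to B$, - $e_3$: $B\to A$, - $e_4$: $A\to A$. It carries two labelings: - $\mathcal L_{\mathbf a}$: $e_0,e_3\mapsto\mathbf a^+$; $e_1\mapsto\overline{\mathbf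 a^+}$; $e_2\mapsto\mathbf a$; $e_4\mapsto\overline{\mathbf a}$; - $\mathcal L^*$: $e_0,e_3,e_4\mapsto1$; $e_1,e_2\mapsto0$. Composition. For a path $e_{i_1}\dots e_{i_k}$ with $i_1=0$, let $\Phi_{\mathbf a}$ map $\mathcal L_{\mathbf a}(e_{i_1})\cdots\mathcal L_{\mathbf a}(e_{i_k})$ to $\mathcal L^*(e_{i_1}\dots e_{i_k})$. For $\mathbf b\in\mathcal A_1$, $\mathbf a\circ\mathbf b:=\Phi_{\mathbf a}^{-1}(\mathbf b)$, which lies again in $\mathcal A_M$. Iterated compositions $\mathbf c_1\circ\cdots\circ\mathbf c_k$ are formed successively; any bracketing yields the same word. Irreducibility. A word $\mathbf a\in\mathcal A_M$ is irreducible if there do not exist $\mathbf c\in\mathcal A_M$ and $\mathbf d\in\mathcal A_1$ with $\mathbf a=\mathbf c\circ\mathbf d$. For words in $\mathcal A_1$, this is with $M=1$. *)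

theory Defs
  imports Main
begin

text \<open>Infinite extension c 0^infinity of a finite word.\<close>
definition pad0 :: "nat list \<Rightarrow> nat \<Rightarrow> nat" where
  "pad0 c i = (if i < length c then c ! i else 0)"

definition lex_less :: "nat list \<Rightarrow> nat list \<Rightarrow> bool" where
  "lex_less c d \<longleftrightarrow> (\<exists>n. (\<forall>i<n. pad0 c i = pad0 d i) \<and> pad0 c n < pad0 d n)"

definition lex_le :: "nat list \<Rightarrow> nat list \<Rightarrow> bool" where
  "lex_le c d \<longleftrightarrow> lex_less c d \<or> pad0 c = pad0 d"

text \<open>c_1...c_k^+ = c_1...c_{k-1}(c_k+1) (used only when c_k < M).\<close>
definition wplus :: "nat list \<Rightarrow> nat list" where
  "wplus c = butlast c @ [last c + 1]"

definition wbar :: "nat \<Rightarrow> nat list \<Rightarrow> nat list" where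
  "wbar M c = map (\<lambda>x. M - x) c"

definition fundamental :: "nat \<Rightarrow> nat list \<Rightarrow> bool" where
  "fundamental M a \<longleftrightarrow>
     set a \<subseteq> {0..M} \<and>
     ((length a = 1 \<and> 2 \<le> M \<and> M - a ! 0 \<le> a ! 0 \<and> a ! 0 < M) \<or>
      (2 \<le> length a \<and>
       (\<forall>i. 1 \<le> i \<and> i < length a \<longrightarrow>
          lex_le (wbar M (take (length a - i) a)) (drop i a) \<and>
          lex_less (drop i a) (take (length a - i) a))))"

datatype vertex = VStart | VA | VB
datatype edge = E0 | E1 | E2 | E3 | E4

fun esrc :: "edge \<Rightarrow> vertex" where
  "esrc E0 = VStart" | "esrc E1 = VA" | "esrc E2 = VB" | "esrc E3 = VB" | "esrc E4 = VA"

fun etgt :: "edge \<Rightarrow> vertex" where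
  "etgt E0 = VA" | "etgt E1 = VB" | "etgt E2 = VB" | "etgt E3 = VA" | "etgt E4 = VA"

definition gpath :: "edge list \<Rightarrow> bool" where
  "gpath p \<longleftrightarrow> p \<noteq> [] \<and> hd p = E0 \<and>
     (\<forall>j. Suc j < length p \<longrightarrow> etgt (p ! j) = esrc (p ! Suc j))"

fun lab_a :: "nat \<Rightarrow> nat list \<Rightarrow> edge \<Rightarrow> nat list" where
  "lab_a M a E0 = wplus a"
| "lab_a M a E3 = wplus a"
| "lab_a M a E1 = wbar M (wplus a)"
| "lab_a M a E2 = a"
| "lab_a M a E4 = wbar M a"

fun lab_star :: "edge \<Rightarrow> nat" where
  "lab_star E0 = 1" | "lab_star E3 = 1" | "lab_star E4 = 1"
| "lab_star E1 = 0" | "lab_star E2 = 0"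

text \<open>a \<circ> b := Phi_a^{-1}(b): the L_a-label of the path whose L^*-label is b.\<close>
definition comp :: "nat \<Rightarrow> nat list \<Rightarrow> nat list \<Rightarrow> nat list" where
  "comp M a b = concat (map (lab_a M a) (THE p. gpath p \<and> map lab_star p = b))"

definition comp_iter :: "nat \<Rightarrow> nat list \<Rightarrow> nat list list \<Rightarrow> nat list" where
  "comp_iter M c cs = foldl (comp M) c cs"

definition irreducible_word :: "nat \<Rightarrow> nat list \<Rightarrow> bool" where
  "irreducible_word M a \<longleftrightarrow> fundamental M a \<and>
     \<not> (\<exists>c d. fundamental M c \<and> fundamental 1 d \<and> a = comp M c d)"

end

theory Submission
  imports Defs "HOL-Library.List_Lexorder"
begin

text \<open>Reading \<open>0 # d\<close> pairwise, \<open>w \<circ> d\<close> replaces each pair \<open>(s, b)\<close> by one of the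
  blocks \<open>w\<close>, \<open>w\<^sup>+\<close>, \<open>wbar (w\<^sup>+)\<close>, \<open>wbar w\<close>. Comparing suffixes of \<open>w \<circ> d\<close> with
  prefixes reduces, at block boundaries, to the corresponding comparison in \<open>d\<close>, and inside a
  block to the fundamental inequalities of \<open>w\<close>; so \<open>w \<circ> d \<in> \<A>\<^sub>M\<close> iff \<open>d \<in> \<A>\<^sub>1\<close>.
  Composition is associative; \<open>w \<circ> d\<close> begins with \<open>w\<^sup>+\<close> and, given \<open>w\<close>, determines \<open>d\<close>.

  If \<open>w \<circ> d = c \<circ> e\<close> with \<open>|w| < |c|\<close>, then \<open>wbar (w\<^sup>+)\<close> occurs at position \<open>|c|\<close> (it begins
  the block after \<open>c\<^sup>+\<close>). In a word built from \<open>w\<close>-blocks, \<open>wbar (w\<^sup>+)\<close> only occurs aligned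
  with a block that follows a letter \<open>1\<close>; this cuts \<open>c\<close> out as \<open>w \<circ> f\<close>, so \<open>c\<close> is not
  irreducible. Hence the first factors of two irreducible decompositions agree, and uniqueness
  follows by induction, as does existence.\<close>

section \<open>Lexicographic order\<close>

lemma pad0_Cons_0 [simp]: "pad0 (x # c) 0 = x"
  by (simp add: pad0_def)

lemma pad0_Cons_Suc [simp]: "pad0 (x # c) (Suc i) = pad0 c i"
  by (simp add: pad0_def)

lemma pad0_Nil [simp]: "pad0 [] i = 0"
  by (simp add: pad0_def)

lemma lex_less_Cons_Cons:
  "lex_less (x # c) (y # d) \<longleftrightarrow> x < y \<or> (x = y \<and> lex_less c d)"
proof
  assume "lex_less (x # c) (y # d)"
  then obtain n where n: "\<forall>i<n. pad0 (x # c) i = pad0 (y # d) i" "pad0 (x # c) n < pad0 (y # d) n"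
    unfolding lex_less_def by blast
  show "x < y \<or> (x = y \<and> lex_less c d)"
  proof (cases n)
    case 0
    then show ?thesis using n by simp
  next
    case (Suc k)
    have "x = y" using n(1) Suc by (metis pad0_Cons_0 zero_less_Suc)
    moreover have "lex_less c d" unfolding lex_less_def
      using n Suc by (intro exI[of _ k]) auto
    ultimately show ?thesis by simp
  qed
next
  assume "x < y \<or> (x = y \<and> lex_less c d)"
  then show "lex_less (x # c) (y # d)"
  proof
    assume "x < y"
    then show ?thesis unfolding lex_less_def by (intro exI[of _ 0]) simp
  next
    assume "x = y \<and> lex_less c d"
    then obtain n where n: "\<forall>i<n. pad0 c i = pad0 d i" "pad0 c n < pad0 d n" "x = y"
      unfolding lex_less_def by blast
    show ?thesis unfolding lex_less_def
    proof (intro exI[of _ "Suc n"] conjI allI impI)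
      fix i assume "i < Suc n"
      then show "pad0 (x # c) i = pad0 (y # d) i" using n by (cases i) auto
    qed (use n in simp)
  qed
qed

lemma lex_less_iff_less: "length c = length d \<Longrightarrow> lex_less c d \<longleftrightarrow> c < d"
proof (induction c d rule: list_induct2)
  case Nil
  then show ?case by (simp add: lex_less_def)
qed (simp add: lex_less_Cons_Cons)

lemma pad0_eq_iff: "length c = length d \<Longrightarrow> pad0 c = pad0 d \<longleftrightarrow> c = d"
proof
  assume l: "length c = length d" and p: "pad0 c = pad0 d"
  show "c = d"
  proof (rule nth_equalityI)
    fix i assume "i < length c"
    then show "c ! i = d ! i" using fun_cong[OF p, of i] l by (simp add: pad0_def)
  qed (use l in simp)
qed simp

lemma lex_le_iff_le: "length c = length d \<Longrightarrow> lex_le c d \<longleftrightarrow> c \<le> d"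
  by (simp add: lex_le_def lex_less_iff_less pad0_eq_iff order_le_less)

lemma append_less_append_iff:
  fixes x1 y1 x2 y2 :: "'a::linorder list"
  shows "length x1 = length y1 \<Longrightarrow> x1 @ x2 < y1 @ y2 \<longleftrightarrow> x1 < y1 \<or> (x1 = y1 \<and> x2 < y2)"
  by (induction x1 y1 rule: list_induct2) auto

lemma append_le_append_iff:
  fixes x1 y1 x2 y2 :: "'a::linorder list"
  shows "length x1 = length y1 \<Longrightarrow> x1 @ x2 \<le> y1 @ y2 \<longleftrightarrow> x1 < y1 \<or> (x1 = y1 \<and> x2 \<le> y2)"
  by (induction x1 y1 rule: list_induct2) auto

lemma less_if_take_less:
  fixes x y :: "'a::linorder list"
  assumes "take k x < take k y" "k \<le> length x" "k \<le> length y"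
  shows "x < y"
proof -
  have "take k x @ u < take k y @ v" for u v
    using assms append_less_append_iff[of "take k x" "take k y"] by simp
  then show ?thesis by (metis append_take_drop_id)
qed

lemma less_if_hd_less:
  fixes x y :: "'a::linorder list"
  shows "x \<noteq> [] \<Longrightarrow> y \<noteq> [] \<Longrightarrow> hd x < hd y \<Longrightarrow> x < y"
  by (cases x; cases y) auto

lemma less_if_nth_less:
  fixes x y :: "'a::linorder list"
  assumes "length x = length y" "t < length x" "\<forall>u<t. x ! u = y ! u" "x ! t < y ! t"
  shows "x < y"
proof -
  have "take t x = take t y" using assms by (intro nth_equalityI) auto
  moreover have "x = take t x @ x ! t # drop (Suc t) x" "y = take t y @ y ! t # drop (Suc t) y"
    using assms(1,2) by (simp_all add: id_take_nth_drop)
  ultimately show ?thesis using assms append_less_append_iff[of "take t x" "take t y"]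
    by (metis Cons_less_Cons length_take)
qed

lemma take_mono_same_length:
  fixes x y :: "'a::linorder list"
  assumes "length x = length y" "x \<le> y"
  shows "take k x \<le> take k y"
proof -
  have "take k x @ drop k x \<le> take k y @ drop k y" using assms by simp
  then show ?thesis using assms(1)
    by (subst (asm) append_le_append_iff) (auto simp: order_le_less)
qed

lemma not_replicate_max_less:
  fixes x :: "nat list"
  shows "set x \<subseteq> {0..m} \<Longrightarrow> \<not> replicate (length x) m < x"
  by (induction x) auto

lemma not_less_replicate_0: "\<not> (x :: nat list) < replicate (length x) 0"
  by (induction x) auto

section \<open>Reflection and successor of words\<close>

lemma length_wbar [simp]: "length (wbar M x) = length x"
  by (simp add: wbar_def)

lemma wbar_Nil [simp]: "wbar M [] = []"
  by (simp add: wbar_def)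

lemma wbar_Cons [simp]: "wbar M (a # x) = (M - a) # wbar M x"
  by (simp add: wbar_def)

lemma wbar_append [simp]: "wbar M (x @ y) = wbar M x @ wbar M y"
  by (simp add: wbar_def)

lemma wbar_eq_Nil_iff [simp]: "wbar M x = [] \<longleftrightarrow> x = []"
  by (simp add: wbar_def)

lemma wbar_take: "wbar M (take k x) = take k (wbar M x)"
  by (simp add: wbar_def take_map)

lemma wbar_drop: "wbar M (drop k x) = drop k (wbar M x)"
  by (simp add: wbar_def drop_map)

lemma hd_wbar: "x \<noteq> [] \<Longrightarrow> hd (wbar M x) = M - hd x"
  by (simp add: wbar_def hd_map)

lemma wbar_wbar: "set x \<subseteq> {0..M} \<Longrightarrow> wbar M (wbar M x) = x"
  by (induction x) auto

lemma set_wbar: "set (wbar M x) \<subseteq> {0..M}"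
  by (auto simp: wbar_def)

lemma wbar_less_wbar_iff:
  "length x = length y \<Longrightarrow> set x \<subseteq> {0..M} \<Longrightarrow> set y \<subseteq> {0..M} \<Longrightarrow>
    wbar M x < wbar M y \<longleftrightarrow> y < x"
  by (induction x y rule: list_induct2) auto

lemma wbar_le_wbar_iff:
  "length x = length y \<Longrightarrow> set x \<subseteq> {0..M} \<Longrightarrow> set y \<subseteq> {0..M} \<Longrightarrow>
    wbar M x \<le> wbar M y \<longleftrightarrow> y \<le> x"
  by (induction x y rule: list_induct2) auto

lemma wplus_snoc [simp]: "wplus (xs @ [a]) = xs @ [a + 1]"
  by (simp add: wplus_def)

lemma wplus_append: "v \<noteq> [] \<Longrightarrow> wplus (u @ v) = u @ wplus v"
  by (cases v rule: rev_cases) (simp, metis append_assoc wplus_snoc)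

lemma length_wplus [simp]: "x \<noteq> [] \<Longrightarrow> length (wplus x) = length x"
  by (cases x rule: rev_cases) auto

lemma wplus_not_Nil: "wplus x \<noteq> []"
  by (simp add: wplus_def)

lemma less_wplus: "x \<noteq> [] \<Longrightarrow> x < (wplus x :: nat list)"
  by (cases x rule: rev_cases) (auto simp: append_less_append_iff)

lemma wplus_le_if_less:
  fixes x y :: "nat list"
  assumes "length x = length y" "x < y"
  shows "wplus x \<le> y"
proof (cases x rule: rev_cases)
  case Nil
  then show ?thesis using assms by simp
next
  case (snoc xs a)
  then obtain ys b where y: "y = ys @ [b]" using assms(1)
    by (cases y rule: rev_cases) auto
  have l: "length xs = length ys" using assms(1) snoc y by simp
  have "xs < ys \<or> xs = ys \<and> a < b" using assms(2) snoc y l by (simp add: append_less_append_iff)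
  then show ?thesis using snoc y l by (auto simp: append_le_append_iff)
qed

lemma wplus_inj:
  assumes "length x = length y" "x \<noteq> []" "wplus x = wplus y"
  shows "x = y"
proof -
  obtain xs a where x: "x = xs @ [a]" using assms(2) by (cases x rule: rev_cases) auto
  obtain ys b where y: "y = ys @ [b]" using assms(1,2) by (cases y rule: rev_cases) auto
  show ?thesis using assms(3) x y by simp
qed

lemma take_wplus: "k < length x \<Longrightarrow> take k (wplus x) = take k x"
  by (cases x rule: rev_cases) auto

lemma drop_wplus: "k < length x \<Longrightarrow> drop k (wplus x) = wplus (drop k x)"
  by (cases x rule: rev_cases) (auto simp: wplus_def)

lemma hd_wplus: "x \<noteq> [] \<Longrightarrow> hd (wplus x) = (if length x = 1 then hd x + 1 else hd x)"
proof (cases x rule: rev_cases)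
  case (snoc xs a)
  then show ?thesis by (cases xs) (auto simp: wplus_def)
qed simp

lemma wplus_eq_take_append_wplus_drop: "k < length x \<Longrightarrow> wplus x = take k x @ wplus (drop k x)"
  using append_take_drop_id[of k "wplus x"] by (simp add: take_wplus drop_wplus)

lemma last_wplus: "x \<noteq> [] \<Longrightarrow> last (wplus x) = last x + 1"
  by (cases x rule: rev_cases) auto

lemma set_wplus: "x \<noteq> [] \<Longrightarrow> set x \<subseteq> {0..M} \<Longrightarrow> last x < M \<Longrightarrow> set (wplus x) \<subseteq> {0..M}"
  by (cases x rule: rev_cases) auto

lemma wbar_wplus_less_wbar:
  assumes "x \<noteq> []" "set x \<subseteq> {0..M}" "last x < M"
  shows "wbar M (wplus x) < wbar M x"
  using assms less_wplus[OF assms(1)] set_wplus[OF assms]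
  by (subst wbar_less_wbar_iff) auto

lemma wplus_wbar_wplus:
  assumes "x \<noteq> []" "last x < M"
  shows "wplus (wbar M (wplus x)) = wbar M x"
proof -
  obtain xs a where "x = xs @ [a]" using assms(1) by (cases x rule: rev_cases) auto
  then show ?thesis using assms(2) by (simp add: wbar_def)
qed

definition binary :: "nat list \<Rightarrow> bool" where
  "binary x \<longleftrightarrow> set x \<subseteq> {0..1}"

lemma binary_Nil [simp]: "binary []"
  by (simp add: binary_def)

lemma binary_Cons [simp]: "binary (a # x) \<longleftrightarrow> a \<le> 1 \<and> binary x"
  by (auto simp: binary_def)

lemma binary_append [simp]: "binary (x @ y) \<longleftrightarrow> binary x \<and> binary y"
  by (auto simp: binary_def)

lemma binary_nth: "binary x \<Longrightarrow> i < length x \<Longrightarrow> x ! i \<le> 1"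
  by (auto simp: binary_def dest!: nth_mem)

lemma binary_nth_cases: "binary x \<Longrightarrow> i < length x \<Longrightarrow> x ! i = 0 \<or> x ! i = 1"
  using binary_nth[of x i] by auto

lemma binary_take: "binary x \<Longrightarrow> binary (take n x)"
  by (auto simp: binary_def dest: in_set_takeD)

lemma binary_drop: "binary x \<Longrightarrow> binary (drop n x)"
  by (auto simp: binary_def dest: in_set_dropD)

lemma binary_wbar: "binary (wbar 1 x)"
  using set_wbar by (simp add: binary_def)

section \<open>Fundamental words\<close>

lemma fundamental_iff:
  "fundamental M a \<longleftrightarrow> set a \<subseteq> {0..M} \<and>
     ((length a = 1 \<and> 2 \<le> M \<and> M - a ! 0 \<le> a ! 0 \<and> a ! 0 < M) \<or>
      (2 \<le> length a \<and>
       (\<forall>i. 1 \<le> i \<and> i < length a \<longrightarrow>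
          wbar M (take (length a - i) a) \<le> drop i a \<and>
          drop i a < take (length a - i) a)))"
proof -
  have "lex_le (wbar M (take (length a - i) a)) (drop i a) \<and>
      lex_less (drop i a) (take (length a - i) a) \<longleftrightarrow>
      wbar M (take (length a - i) a) \<le> drop i a \<and> drop i a < take (length a - i) a"
    if "i < length a" for i
    using that by (simp add: lex_le_iff_le lex_less_iff_less)
  then show ?thesis unfolding fundamental_def by (metis (no_types, lifting))
qed

lemma fundamental_set: "fundamental M a \<Longrightarrow> set a \<subseteq> {0..M}"
  by (simp add: fundamental_def)

lemma fundamental_not_Nil: "fundamental M a \<Longrightarrow> a \<noteq> []"
  by (auto simp: fundamental_def)

lemma fundamental_drop_less_take:
  "fundamental M a \<Longrightarrow> 1 \<le> i \<Longrightarrow> i < length a \<Longrightarrow> drop i a < take (length a - i) a"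
  by (simp add: fundamental_iff)

lemma fundamental_wbar_take_le_drop:
  "fundamental M a \<Longrightarrow> 1 \<le> i \<Longrightarrow> i < length a \<Longrightarrow> wbar M (take (length a - i) a) \<le> drop i a"
  by (simp add: fundamental_iff)

lemma fundamental_wbar_drop_le_take:
  assumes "fundamental M a" "1 \<le> i" "i < length a"
  shows "wbar M (drop i a) \<le> take (length a - i) a"
proof -
  have s: "set a \<subseteq> {0..M}" using assms fundamental_set by blast
  have "wbar M (drop i a) \<le> wbar M (wbar M (take (length a - i) a))"
    using s fundamental_wbar_take_le_drop[OF assms]
    by (subst wbar_le_wbar_iff) (auto simp: set_wbar dest: in_set_takeD in_set_dropD)
  also have "\<dots> = take (length a - i) a" using s by (intro wbar_wbar) (auto dest: in_set_takeD)
  finally show ?thesis .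
qed

lemma fundamental_last_hd:
  assumes "fundamental M a" "2 \<le> length a"
  shows "M - hd a \<le> last a" "last a < hd a"
proof -
  have "drop (length a - 1) a = [last a]" using assms(2) by (cases a rule: rev_cases) auto
  moreover have "take 1 a = [hd a]" using assms(2) by (cases a) auto
  moreover have i: "1 \<le> length a - 1" "length a - 1 < length a" "length a - (length a - 1) = 1"
    using assms(2) by auto
  ultimately show "M - hd a \<le> last a" "last a < hd a"
    using fundamental_wbar_take_le_drop[OF assms(1) i(1,2)]
      fundamental_drop_less_take[OF assms(1) i(1,2)] by (simp_all only: i(3)) auto
qed

lemma fundamental_length_1:
  "fundamental M a \<Longrightarrow> length a = 1 \<Longrightarrow> M - hd a \<le> hd a \<and> hd a < M"
  by (cases a) (auto simp: fundamental_def)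

lemma fundamental_last_less:
  assumes a: "fundamental M a"
  shows "last a < M"
proof (cases "length a = 1")
  case True
  then show ?thesis using fundamental_length_1[OF a] by (cases a) auto
next
  case False
  then have "2 \<le> length a" using fundamental_not_Nil[OF a] by (cases "length a") auto
  then show ?thesis
    using fundamental_last_hd[OF a] fundamental_set[OF a] fundamental_not_Nil[OF a]
    by (cases a) auto
qed

lemma fundamental_hd_wplus:
  assumes "fundamental M a"
  shows "M - hd a < hd (wplus a)" "M - hd (wplus a) < hd a"
proof -
  have ne: "a \<noteq> []" using fundamental_not_Nil[OF assms] .
  have "M - hd a < hd (wplus a) \<and> M - hd (wplus a) < hd a"
  proof (cases "length a = 1")
    case True
    then show ?thesis using fundamental_length_1[OF assms] hd_wplus[OF ne] by auto
  next
    case False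
    then have "2 \<le> length a" using ne by (cases "length a") auto
    then show ?thesis using fundamental_last_hd[OF assms] hd_wplus[OF ne] False by auto
  qed
  then show "M - hd a < hd (wplus a)" "M - hd (wplus a) < hd a" by auto
qed

lemma fundamental_1D:
  assumes "fundamental 1 d"
  shows "binary d" "2 \<le> length d" "hd d = 1" "last d = 0"
proof -
  show "binary d" using fundamental_set[OF assms] by (simp add: binary_def)
  show l: "2 \<le> length d" using assms by (auto simp: fundamental_def)
  have "hd d \<le> 1" using fundamental_set[OF assms] fundamental_not_Nil[OF assms] by (cases d) auto
  then show "hd d = 1" "last d = 0" using fundamental_last_hd[OF assms l] by auto
qed

section \<open>Block substitution\<close>

text \<open>The edge of \<open>G\<close> carrying \<open>L\<^sup>*\<close>-label \<open>b\<close> and leaving the vertex that is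
  entered by \<open>L\<^sup>*\<close>-label \<open>s\<close> (\<open>A\<close> for \<open>s = 1\<close>, \<open>B\<close> for \<open>s = 0\<close>) has
  \<open>L\<^sub>w\<close>-label \<open>block M w s b\<close>. Hence \<open>w \<circ> d\<close> is \<open>blocks M w (0 # d)\<close>, the
  edge \<open>e\<^sub>0\<close> playing the role of the pair \<open>(0, 1)\<close>.\<close>

definition block :: "nat \<Rightarrow> nat list \<Rightarrow> nat \<Rightarrow> nat \<Rightarrow> nat list" where
  "block M w s b = (if s = 0 then (if b = 0 then w else wplus w)
                    else (if b = 0 then wbar M (wplus w) else wbar M w))"

fun blocks :: "nat \<Rightarrow> nat list \<Rightarrow> nat list \<Rightarrow> nat list" where
  "blocks M w (s # b # r) = block M w s b @ blocks M w (b # r)"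
| "blocks M w _ = []"

lemma length_block [simp]: "w \<noteq> [] \<Longrightarrow> length (block M w s b) = length w"
  by (simp add: block_def)

lemma block_not_Nil [simp]: "w \<noteq> [] \<Longrightarrow> block M w s b \<noteq> []"
  by (simp add: block_def wplus_not_Nil)

lemma set_block:
  "w \<noteq> [] \<Longrightarrow> set w \<subseteq> {0..M} \<Longrightarrow> last w < M \<Longrightarrow> set (block M w s b) \<subseteq> {0..M}"
  by (auto simp: block_def set_wbar dest: set_wplus[of w M])

lemma take_block:
  "r < length w \<Longrightarrow> take r (block M w s b) = (if s = 0 then take r w else wbar M (take r w))"
  by (simp add: block_def take_wplus wbar_take[symmetric])

lemma drop_block:
  "r < length w \<Longrightarrow> drop r (block M w s b) =
    (if s = 0 then (if b = 0 then drop r w else wplus (drop r w))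
     else (if b = 0 then wbar M (wplus (drop r w)) else wbar M (drop r w)))"
  by (simp add: block_def drop_wplus wbar_drop[symmetric])

lemma block_0_less_block_1:
  assumes "w \<noteq> []" "set w \<subseteq> {0..M}" "last w < M"
  shows "block M w s 0 < block M w s 1"
  using less_wplus[OF assms(1)] wbar_wplus_less_wbar[OF assms] by (simp add: block_def)

lemma wplus_block_0:
  "w \<noteq> [] \<Longrightarrow> last w < M \<Longrightarrow> wplus (block M w s 0) = block M w s 1"
  by (simp add: block_def wplus_wbar_wplus)

lemma wbar_block:
  assumes "w \<noteq> []" "set w \<subseteq> {0..M}" "last w < M" "s \<le> 1" "b \<le> 1"
  shows "wbar M (block M w s b) = block M w (1 - s) (1 - b)"
  using assms wbar_wbar[OF assms(2)] wbar_wbar[OF set_wplus[OF assms(1,2,3)]]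
  by (auto simp: block_def)

lemma length_blocks: "w \<noteq> [] \<Longrightarrow> length (blocks M w D) = length w * (length D - 1)"
  by (induction M w D rule: blocks.induct) auto

lemma set_blocks:
  "w \<noteq> [] \<Longrightarrow> set w \<subseteq> {0..M} \<Longrightarrow> last w < M \<Longrightarrow> set (blocks M w D) \<subseteq> {0..M}"
  by (induction M w D rule: blocks.induct) (auto dest: set_block)

lemma blocks_0_Cons:
  "w \<noteq> [] \<Longrightarrow> d \<noteq> [] \<Longrightarrow> hd d = 1 \<Longrightarrow> blocks M w (0 # d) = wplus w @ blocks M w d"
  by (cases d) (auto simp: block_def)

lemma blocks_Cons_append:
  "u \<noteq> [] \<Longrightarrow> blocks M w (s # u @ v) = blocks M w (s # u) @ blocks M w (last u # v)"
proof (induction u arbitrary: s)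
  case (Cons x u)
  then show ?case by (cases u) auto
qed simp

lemma drop_blocks: "w \<noteq> [] \<Longrightarrow> drop (j * length w) (blocks M w D) = blocks M w (drop j D)"
proof (induction j arbitrary: D)
  case (Suc j)
  then show ?case by (cases D; cases "tl D") auto
qed simp

lemma take_blocks:
  "w \<noteq> [] \<Longrightarrow> take (j * length w) (blocks M w D) = blocks M w (take (Suc j) D)"
proof (induction j arbitrary: D)
  case 0
  then show ?case by (cases D; cases "tl D") auto
next
  case (Suc j)
  then show ?case by (cases D; cases "tl D") auto
qed

lemma blocks_drop_eq:
  assumes "j + 1 < length D"
  shows "blocks M w (drop j D) = block M w (D ! j) (D ! (j + 1)) @ blocks M w (drop (j + 1) D)"
proof -
  have "drop j D = D ! j # D ! (j + 1) # drop (j + 2) D"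
    using assms by (metis Cons_nth_drop_Suc Suc_eq_plus1 Suc_lessD add_2_eq_Suc')
  moreover have "drop (j + 1) D = D ! (j + 1) # drop (j + 2) D"
    using assms by (metis Cons_nth_drop_Suc Suc_eq_plus1 add_2_eq_Suc')
  ultimately show ?thesis by simp
qed

lemma wplus_blocks:
  assumes "w \<noteq> []" "last w < M"
  shows "wplus (blocks M w (s # u @ [0])) = blocks M w (s # u @ [1])"
proof (induction u arbitrary: s)
  case Nil
  then show ?case using wplus_block_0[OF assms] by simp
next
  case (Cons x u)
  have "blocks M w (x # u @ [0]) \<noteq> []" using assms(1) by (cases u) auto
  then show ?case using Cons[of x] by (simp add: wplus_append)
qed

lemma wbar_blocks:
  assumes "w \<noteq> []" "set w \<subseteq> {0..M}" "last w < M"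
  shows "binary D \<Longrightarrow> wbar M (blocks M w D) = blocks M w (wbar 1 D)"
proof (induction D rule: induct_list012)
  case (3 x y r)
  then show ?case using wbar_block[OF assms, of x y] by simp
qed simp_all

lemma take_blocks_0_Cons:
  "k \<le> length w \<Longrightarrow> d \<noteq> [] \<Longrightarrow> hd d = 1 \<Longrightarrow> take k (blocks M w (0 # d)) = take k (wplus w)"
  by (cases "w = []") (auto simp: blocks_0_Cons)

lemma drop_blocks_interior:
  assumes "w \<noteq> []" "r < length w" "j + 1 < length D"
  shows "drop (j * length w + r) (blocks M w D) =
    drop r (block M w (D ! j) (D ! (j + 1))) @ blocks M w (drop (j + 1) D)"
proof -
  have "drop (j * length w + r) (blocks M w D) = drop r (drop (j * length w) (blocks M w D))"
    by (simp add: add.commute)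
  then have "drop (j * length w + r) (blocks M w D) = drop r (blocks M w (drop j D))"
    using drop_blocks[OF assms(1)] by simp
  then show ?thesis using blocks_drop_eq[OF assms(3)] assms(1,2) by simp
qed

lemma take_drop_blocks_interior:
  assumes "w \<noteq> []" "r < length w" "j + 2 < length D"
  shows "take (length w) (drop (j * length w + r) (blocks M w D)) =
    drop r (block M w (D ! j) (D ! (j + 1))) @ take r (block M w (D ! (j + 1)) (D ! (j + 2)))"
  using drop_blocks_interior[OF assms(1,2), of j D] blocks_drop_eq[of "j + 1" D M w] assms by simp

lemma drop_blocks_boundary:
  assumes "w \<noteq> []" "1 \<le> j" "j < length f"
  shows "drop (j * length w) (blocks M w (0 # f)) = blocks M w (f ! (j - 1) # drop j f)"
proof -
  have "drop j (0 # f) = f ! (j - 1) # drop j f"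
    using assms(2,3) Cons_nth_drop_Suc[of "j - 1" f] by (cases j) auto
  then show ?thesis using drop_blocks[OF assms(1)] by metis
qed

lemma take_blocks_boundary:
  assumes "w \<noteq> []" "j < length f"
  shows "take (length (blocks M w (0 # f)) - j * length w) (blocks M w (0 # f)) =
    blocks M w (0 # take (length f - j) f)"
proof -
  have "length (blocks M w (0 # f)) - j * length w = (length f - j) * length w"
    using length_blocks[OF assms(1), of M "0 # f"]
    by (simp add: diff_mult_distrib mult.commute[of "length w"])
  then show ?thesis using take_blocks[OF assms(1), of "length f - j" M "0 # f"] by simp
qed

context
  fixes M :: nat and w :: "nat list"
  assumes w: "w \<noteq> []" "set w \<subseteq> {0..M}" "last w < M"
begin

lemma blocks_less_blocks_iff:
  "length x = length y \<Longrightarrow> binary x \<Longrightarrow> binary y \<Longrightarrow>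
    blocks M w (s # x) < blocks M w (s # y) \<longleftrightarrow> x < y"
proof (induction x y arbitrary: s rule: list_induct2)
  case (Cons a x b y)
  then have "a = b \<or> (a = 0 \<and> b = 1) \<or> (a = 1 \<and> b = 0)" by auto
  then show ?case using Cons block_0_less_block_1[OF w, of s]
    by (auto simp: append_less_append_iff w(1))
qed simp

lemma blocks_le_blocks_iff:
  "length x = length y \<Longrightarrow> binary x \<Longrightarrow> binary y \<Longrightarrow>
    blocks M w (s # x) \<le> blocks M w (s # y) \<longleftrightarrow> x \<le> y"
  using blocks_less_blocks_iff[of y x s] by (auto simp: not_less[symmetric])

lemma blocks_eq_blocks_iff:
  "length x = length y \<Longrightarrow> binary x \<Longrightarrow> binary y \<Longrightarrow>
    blocks M w (s # x) = blocks M w (s # y) \<longleftrightarrow> x = y"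
  using blocks_less_blocks_iff[of x y s] blocks_less_blocks_iff[of y x s]
  by (metis less_irrefl linorder_neqE)

end

section \<open>Composition as block substitution\<close>

definition edge_of :: "nat \<Rightarrow> nat \<Rightarrow> edge" where
  "edge_of s b = (if s = 0 then (if b = 0 then E2 else E3) else (if b = 0 then E1 else E4))"

definition path_of :: "nat list \<Rightarrow> edge list" where
  "path_of d = E0 # map (\<lambda>(s, b). edge_of s b) (zip d (tl d))"

lemma length_path_of: "d \<noteq> [] \<Longrightarrow> length (path_of d) = length d"
  by (simp add: path_of_def)

lemma path_of_nth_Suc: "Suc j < length d \<Longrightarrow> path_of d ! Suc j = edge_of (d ! j) (d ! Suc j)"
  by (simp add: path_of_def nth_tl)

lemma lab_star_edge_of: "b \<le> 1 \<Longrightarrow> lab_star (edge_of s b) = b"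
  by (auto simp: edge_of_def)

lemma lab_a_edge_of: "s \<le> 1 \<Longrightarrow> b \<le> 1 \<Longrightarrow> lab_a M w (edge_of s b) = block M w s b"
  by (auto simp: block_def edge_of_def)

lemma esrc_edge_of: "esrc (edge_of s b) = (if s = 0 then VB else VA)"
  by (auto simp: edge_of_def)

lemma etgt_edge_of: "b \<le> 1 \<Longrightarrow> etgt (edge_of s b) = (if b = 0 then VB else VA)"
  by (auto simp: edge_of_def)

lemma edge_of_esrc_lab_star:
  "e \<noteq> E0 \<Longrightarrow> edge_of (if esrc e = VA then 1 else 0) (lab_star e) = e"
  by (cases e) (auto simp: edge_of_def)

context
  fixes d :: "nat list"
  assumes d: "binary d" "d \<noteq> []" "hd d = 1"
begin

lemma map_lab_star_path_of: "map lab_star (path_of d) = d"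
proof (rule nth_equalityI)
  show "length (map lab_star (path_of d)) = length d" using d length_path_of by simp
next
  fix i assume "i < length (map lab_star (path_of d))"
  then have i: "i < length d" using d length_path_of by simp
  show "map lab_star (path_of d) ! i = d ! i"
  proof (cases i)
    case 0
    then show ?thesis using d i by (cases d) (auto simp: path_of_def)
  next
    case (Suc j)
    then show ?thesis using i path_of_nth_Suc[of j d] length_path_of[OF d(2)]
        lab_star_edge_of binary_nth[OF d(1) i] by simp
  qed
qed

lemma etgt_path_of_nth: "j < length d \<Longrightarrow> etgt (path_of d ! j) = (if d ! j = 0 then VB else VA)"
  using d binary_nth[OF d(1)] path_of_nth_Suc[of "j - 1" d] etgt_edge_of
  by (cases j) (auto simp: path_of_def hd_conv_nth)

lemma gpath_path_of: "gpath (path_of d)"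
  unfolding gpath_def
proof (intro conjI allI impI)
  show "path_of d \<noteq> []" "hd (path_of d) = E0" by (simp_all add: path_of_def)
next
  fix j assume "Suc j < length (path_of d)"
  then have j: "Suc j < length d" using length_path_of[OF d(2)] by simp
  then show "etgt (path_of d ! j) = esrc (path_of d ! Suc j)"
    using etgt_path_of_nth[of j] path_of_nth_Suc[OF j] esrc_edge_of by simp
qed

lemma gpath_eq_path_of:
  assumes "gpath p" "map lab_star p = d"
  shows "p = path_of d"
proof (rule nth_equalityI)
  have lp: "length p = length d" using assms(2) by auto
  then show "length p = length (path_of d)" using length_path_of[OF d(2)] by simp
  fix i assume i: "i < length p"
  show "p ! i = path_of d ! i"
  proof (cases i)
    case 0
    then show ?thesis using assms(1) by (cases p) (auto simp: gpath_def path_of_def)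
  next
    case (Suc j)
    have t: "etgt (p ! j) = esrc (p ! Suc j)" using assms(1) i Suc by (auto simp: gpath_def)
    then have ne: "p ! Suc j \<noteq> E0" by (cases "p ! j") auto
    have lj: "lab_star (p ! j) = d ! j" "lab_star (p ! Suc j) = d ! Suc j"
      using assms(2) i Suc by auto
    have "(if esrc (p ! Suc j) = VA then 1 else 0) = d ! j"
      using t[symmetric] lj binary_nth[OF d(1), of j] i Suc lp by (cases "p ! j") auto
    then have "p ! Suc j = edge_of (d ! j) (d ! Suc j)"
      using edge_of_esrc_lab_star[OF ne] lj by simp
    then show ?thesis using Suc path_of_nth_Suc[of j d] i lp by simp
  qed
qed

lemma comp_eq_blocks: "comp M w d = blocks M w (0 # d)"
proof -
  have the: "(THE p. gpath p \<and> map lab_star p = d) = path_of d"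
    using gpath_path_of map_lab_star_path_of gpath_eq_path_of by blast
  obtain r where r: "d = 1 # r" using d by (cases d) auto
  have labels: "lab_a M w (edge_of s b) = block M w s b" if "(s, b) \<in> set (zip d r)" for s b
    using set_zip_leftD[OF that] set_zip_rightD[OF that] d(1) r
    by (intro lab_a_edge_of) (auto simp: binary_def)
  have blocks_zip: "blocks M w D = concat (map (\<lambda>(s, b). block M w s b) (zip D (tl D)))" for D
    by (induction M w D rule: blocks.induct) auto
  have "comp M w d = wplus w @ concat (map (\<lambda>(s, b). block M w s b) (zip d r))"
    using labels r unfolding comp_def the path_of_def by (auto intro!: arg_cong[where f = concat])
  also have "\<dots> = blocks M w (0 # d)"
    using blocks_zip r by (simp add: block_def)
  finally show ?thesis .
qed

end

section \<open>Closure of fundamental words under composition\<close>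

context
  fixes M :: nat and w :: "nat list" and r :: nat
  assumes w: "fundamental M w" and r: "0 < r" "r < length w"
begin

private lemma drop_facts:
  "drop r w \<noteq> []" "set (drop r w) \<subseteq> {0..M}" "last (drop r w) < M"
  using r fundamental_set[OF w] fundamental_last_less[OF w] by (auto dest: in_set_dropD)

lemma wbar_take_less_wplus_drop: "wbar M (take r w) < wplus (drop (length w - r) w)"
proof -
  have "wbar M (take (length w - (length w - r)) w) \<le> drop (length w - r) w"
    using fundamental_wbar_take_le_drop[OF w, of "length w - r"] r by simp
  moreover have "drop (length w - r) w < wplus (drop (length w - r) w)"
    using r by (intro less_wplus) simp
  ultimately show ?thesis using r by simp
qed

lemma wbar_wplus_drop_less_take: "wbar M (wplus (drop (length w - r) w)) < take r w"
proof -
  have "wbar M (drop (length w - r) w) \<le> take (length w - (length w - r)) w"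
    using fundamental_wbar_drop_le_take[OF w, of "length w - r"] r by simp
  moreover have "wbar M (wplus (drop (length w - r) w)) < wbar M (drop (length w - r) w)"
    using r fundamental_set[OF w] fundamental_last_less[OF w]
    by (intro wbar_wplus_less_wbar) (auto dest: in_set_dropD)
  ultimately show ?thesis using r by simp
qed

lemma drop_block_le_take: "drop r (block M w s b) \<le> take (length w - r) w"
  and drop_block_0_less_take: "drop r (block M w s 0) < take (length w - r) w"
proof -
  have upper: "drop r w < take (length w - r) w"
    using fundamental_drop_less_take[OF w] r by simp
  have "wplus (drop r w) \<le> take (length w - r) w"
    using wplus_le_if_less[OF _ upper] r by simp
  moreover have "wbar M (wplus (drop r w)) < take (length w - r) w"
    using less_le_trans[OF wbar_wplus_less_wbar[OF drop_facts]
        fundamental_wbar_drop_le_take[OF w _ r(2)]] r(1)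
    by simp
  moreover have "wbar M (drop r w) \<le> take (length w - r) w"
    using fundamental_wbar_drop_le_take[OF w] r by simp
  ultimately show "drop r (block M w s b) \<le> take (length w - r) w"
    "drop r (block M w s 0) < take (length w - r) w"
    using upper r by (auto simp: drop_block)
qed

lemma wbar_take_le_drop_block: "wbar M (take (length w - r) w) \<le> drop r (block M w s b)"
  and wbar_take_less_drop_block_1: "wbar M (take (length w - r) w) < drop r (block M w s 1)"
proof -
  have lower: "wbar M (take (length w - r) w) \<le> drop r w"
    using fundamental_wbar_take_le_drop[OF w] r by simp
  have "wbar M (take (length w - r) w) < wplus (drop r w)"
    using lower less_wplus[OF drop_facts(1)] by simp
  moreover have "wbar M (take (length w - r) w) \<le> wbar M (wplus (drop r w))"
    using wplus_le_if_less[of "drop r w"] fundamental_drop_less_take[OF w] r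
      set_wplus[OF drop_facts] fundamental_set[OF w]
    by (subst wbar_le_wbar_iff) (auto dest: in_set_takeD)
  moreover have "wbar M (take (length w - r) w) < wbar M (drop r w)"
    using fundamental_drop_less_take[OF w] r drop_facts fundamental_set[OF w]
    by (subst wbar_less_wbar_iff) (auto dest: in_set_takeD)
  ultimately show "wbar M (take (length w - r) w) \<le> drop r (block M w s b)"
    "wbar M (take (length w - r) w) < drop r (block M w s 1)"
    using lower r by (auto simp: drop_block)
qed

end

lemma hd_block_1_less_hd_wplus: "fundamental M w \<Longrightarrow> hd (block M w 1 b) < hd (wplus w)"
  using fundamental_hd_wplus[of M w] hd_wplus[of w] fundamental_not_Nil[of M w]
  by (auto simp: block_def hd_wbar wplus_not_Nil)

lemma hd_wbar_wplus_less_hd_block_0: "fundamental M w \<Longrightarrow> M - hd (wplus w) < hd (block M w 0 b)"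
  using fundamental_hd_wplus[of M w] hd_wplus[of w] fundamental_not_Nil[of M w]
  by (auto simp: block_def)

context
  fixes M :: nat and w f :: "nat list" and j :: nat
  assumes w: "fundamental M w"
    and f: "binary f" "hd f = 1"
    and j: "1 \<le> j" "j < length f"
begin

private lemma w_facts: "w \<noteq> []" "set w \<subseteq> {0..M}" "last w < M"
  using w fundamental_not_Nil fundamental_set fundamental_last_less by blast+

private lemma take_f_eq: "take (length f - j) f = 1 # take (length f - j - 1) (tl f)"
  using f(2) j by (cases f) (auto simp: take_Cons')

private lemma lengths_f: "length (drop j f) = length (take (length f - j) f)"
  "binary (drop j f)" "binary (take (length f - j) f)"
  using j binary_drop[OF f(1)] binary_take[OF f(1)] by auto

lemma blocks_boundary_upper_iff:
  defines "a \<equiv> blocks M w (0 # f)" and "i \<equiv> j * length w"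
  shows "drop i a < take (length a - i) a \<longleftrightarrow> f ! (j - 1) = 1 \<or> drop j f < take (length f - j) f"
proof -
  note forms = drop_blocks_boundary[OF w_facts(1) j] take_blocks_boundary[OF w_facts(1) j(2)]
  have "f ! (j - 1) = 0 \<or> f ! (j - 1) = 1" using binary_nth_cases[OF f(1), of "j - 1"] j by simp
  then show ?thesis
  proof
    assume "f ! (j - 1) = 0"
    then show ?thesis using forms blocks_less_blocks_iff[OF w_facts lengths_f, of 0]
      by (simp add: a_def i_def)
  next
    assume f1: "f ! (j - 1) = 1"
    have "drop i a = block M w 1 (f ! j) @ blocks M w (drop j f)"
      using forms f1 j by (simp add: a_def i_def Cons_nth_drop_Suc[OF j(2), symmetric])
    moreover have "take (length a - i) a = wplus w @ blocks M w (take (length f - j) f)"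
      using forms take_f_eq by (simp add: a_def i_def block_def)
    ultimately have "drop i a < take (length a - i) a"
      using hd_block_1_less_hd_wplus[OF w] w_facts(1)
      by (intro less_if_hd_less) (simp_all add: wplus_not_Nil)
    then show ?thesis using f1 by simp
  qed
qed

lemma blocks_boundary_lower_iff:
  defines "a \<equiv> blocks M w (0 # f)" and "i \<equiv> j * length w"
  shows "wbar M (take (length a - i) a) \<le> drop i a \<longleftrightarrow>
    f ! (j - 1) = 0 \<or> wbar 1 (take (length f - j) f) \<le> drop j f"
proof -
  note forms = drop_blocks_boundary[OF w_facts(1) j] take_blocks_boundary[OF w_facts(1) j(2)]
  have bar: "wbar M (take (length a - i) a) = blocks M w (1 # wbar 1 (take (length f - j) f))"
    using forms wbar_blocks[OF w_facts, of "0 # take (length f - j) f"] lengths_f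
    by (simp add: a_def i_def)
  have "f ! (j - 1) = 0 \<or> f ! (j - 1) = 1" using binary_nth_cases[OF f(1), of "j - 1"] j by simp
  then show ?thesis
  proof
    assume f0: "f ! (j - 1) = 0"
    have "drop i a = block M w 0 (f ! j) @ blocks M w (drop j f)"
      using forms f0 j by (simp add: a_def i_def Cons_nth_drop_Suc[OF j(2), symmetric])
    moreover have "blocks M w (1 # wbar 1 (take (length f - j) f)) =
        wbar M (wplus w) @ blocks M w (wbar 1 (take (length f - j) f))"
      using take_f_eq by (simp add: block_def)
    ultimately have "wbar M (take (length a - i) a) < drop i a"
      using bar hd_wbar_wplus_less_hd_block_0[OF w] w_facts(1)
      by (intro less_if_hd_less) (simp_all add: wplus_not_Nil hd_wbar)
    then show ?thesis using f0 by simp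
  next
    assume "f ! (j - 1) = 1"
    then show ?thesis
      using bar forms lengths_f binary_wbar
        blocks_le_blocks_iff[OF w_facts, of "wbar 1 (take (length f - j) f)" "drop j f" 1]
      by (simp add: a_def i_def)
  qed
qed

end

context
  fixes M :: nat and w d :: "nat list" and j r :: nat
  assumes w: "fundamental M w"
    and d: "binary d" "d \<noteq> []" "hd d = 1" "last d = 0"
    and r: "0 < r" "r < length w"
    and j: "j < length d"
begin

private lemma w_ne: "w \<noteq> []"
  using fundamental_not_Nil[OF w] .

private lemma length_rest:
  "length (blocks M w (0 # d)) - (j * length w + r) = (length d - j) * length w - r"
proof -
  have "length d * length w - j * length w = (length d - j) * length w"
    by (rule diff_mult_distrib[symmetric])
  then show ?thesis using length_blocks[OF w_ne, of M "0 # d"] by (simp add: mult.commute)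
qed

private lemma drop_rest:
  "drop (j * length w + r) (blocks M w (0 # d)) =
    drop r (block M w ((0 # d) ! j) (d ! j)) @ blocks M w (drop j d)"
  using drop_blocks_interior[OF w_ne r(2), of j "0 # d" M] j by simp

private lemma short_rest: "length w - r \<le> length (blocks M w (0 # d)) - (j * length w + r)"
proof -
  have "1 * length w \<le> (length d - j) * length w" using j by (intro mult_le_mono1) simp
  then show ?thesis
    using length_rest diff_le_mono[of "length w" "(length d - j) * length w" r] by simp
qed

private lemma prefix_rest:
  assumes "k \<le> length w" "k \<le> length (blocks M w (0 # d)) - (j * length w + r)"
  shows "take k (take (length (blocks M w (0 # d)) - (j * length w + r)) (blocks M w (0 # d))) =
    take k (wplus w)"
  using assms take_blocks_0_Cons[OF assms(1) d(2,3)] by (simp add: min_absorb1)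

private lemma next_block_exists:
  assumes "d ! j = 1"
  shows "j + 1 < length d"
proof (rule ccontr)
  assume "\<not> j + 1 < length d"
  then have "j = length d - 1" using j by simp
  then show False using d(2,4) assms by (simp add: last_conv_nth)
qed

private lemma take_length_w_rest:
  "j + 1 < length d \<Longrightarrow> take (length w) (drop (j * length w + r) (blocks M w (0 # d))) =
    drop r (block M w ((0 # d) ! j) (d ! j)) @ take r (block M w (d ! j) (d ! (j + 1)))"
  using take_drop_blocks_interior[OF w_ne r(2), of j "0 # d" M] by simp

private lemma long_rest:
  "j + 1 < length d \<Longrightarrow> length w \<le> length (blocks M w (0 # d)) - (j * length w + r)"
proof -
  assume "j + 1 < length d"
  then have "2 * length w \<le> (length d - j) * length w" by (intro mult_le_mono1) simp
  then show ?thesis using length_rest r by linarith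
qed

lemma blocks_interior_upper:
  defines "a \<equiv> blocks M w (0 # d)" and "i \<equiv> j * length w + r"
  shows "drop i a < take (length a - i) a"
proof -
  define B where "B = block M w ((0 # d) ! j) (d ! j)"
  have lenB: "length (drop r B) = length w - r" using w_ne by (simp add: B_def)
  have rest: "length w - r \<le> length a - i" using short_rest by (simp add: a_def i_def)
  consider "d ! j = 0" | "d ! j = 1" using binary_nth_cases[OF d(1) j] by auto
  then show ?thesis
  proof cases
    case 1
    have "take (length w - r) (drop i a) = drop r B"
      using drop_rest lenB by (simp add: a_def i_def B_def)
    also have "\<dots> < take (length w - r) w"
      using drop_block_0_less_take[OF w r] 1 by (simp add: B_def)
    also have "\<dots> = take (length w - r) (take (length a - i) a)"
      using prefix_rest[of "length w - r"] rest r take_wplus[of "length w - r" w]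
      by (simp add: a_def i_def)
    finally show ?thesis by (rule less_if_take_less) (use rest in auto)
  next
    case 2
    note next_ex = next_block_exists[OF 2]
    have "drop r B @ take r (block M w 1 (d ! (j + 1))) <
        take (length w - r) w @ wplus (drop (length w - r) w)"
      using drop_block_le_take[OF w r] wbar_take_less_wplus_drop[OF w r] take_block[OF r(2)] lenB
      by (auto simp: append_less_append_iff B_def order_le_less)
    then have "take (length w) (drop i a) < take (length w) (take (length a - i) a)"
      using take_length_w_rest[OF next_ex] prefix_rest[of "length w"] long_rest[OF next_ex] 2
        wplus_eq_take_append_wplus_drop[of "length w - r" w] r
      by (simp add: a_def i_def B_def w_ne)
    then show ?thesis
      by (rule less_if_take_less) (use long_rest[OF next_ex] in \<open>auto simp: a_def i_def\<close>)
  qed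
qed

lemma blocks_interior_lower:
  defines "a \<equiv> blocks M w (0 # d)" and "i \<equiv> j * length w + r"
  shows "wbar M (take (length a - i) a) \<le> drop i a"
proof -
  define B where "B = block M w ((0 # d) ! j) (d ! j)"
  have lenB: "length (drop r B) = length w - r" using w_ne by (simp add: B_def)
  have rest: "length w - r \<le> length a - i" using short_rest by (simp add: a_def i_def)
  have bar_prefix:
    "take (length w - r) (wbar M (take (length a - i) a)) = wbar M (take (length w - r) w)"
    using prefix_rest[of "length w - r"] rest r take_wplus[of "length w - r" w]
    by (simp add: a_def i_def wbar_take[symmetric])
  consider "d ! j = 1" | "d ! j = 0" "j + 1 < length d" | "d ! j = 0" "j + 1 = length d"
    using binary_nth_cases[OF d(1) j] j by linarith
  then show ?thesis
  proof cases
    case 1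
    have "take (length w - r) (drop i a) = drop r B"
      using drop_rest lenB by (simp add: a_def i_def B_def)
    then have "take (length w - r) (wbar M (take (length a - i) a)) <
        take (length w - r) (drop i a)"
      using bar_prefix wbar_take_less_drop_block_1[OF w r] 1 by (simp add: B_def)
    then have "wbar M (take (length a - i) a) < drop i a"
      by (rule less_if_take_less) (use rest in auto)
    then show ?thesis by simp
  next
    case 2
    have "wbar M (take (length w - r) w) @ wbar M (wplus (drop (length w - r) w)) <
        drop r B @ take r (block M w 0 (d ! (j + 1)))"
      using wbar_take_le_drop_block[OF w r] wbar_wplus_drop_less_take[OF w r]
        take_block[OF r(2)] lenB
      by (auto simp: append_less_append_iff B_def order_le_less)
    then have "take (length w) (wbar M (take (length a - i) a)) < take (length w) (drop i a)"
      using take_length_w_rest[OF 2(2)] prefix_rest[of "length w"] long_rest[OF 2(2)] 2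
        wplus_eq_take_append_wplus_drop[of "length w - r" w] r
      by (simp add: a_def i_def B_def w_ne wbar_take[symmetric])
    then have "wbar M (take (length a - i) a) < drop i a"
      by (rule less_if_take_less) (use long_rest[OF 2(2)] in \<open>auto simp: a_def i_def\<close>)
    then show ?thesis by simp
  next
    case 3
    have "drop j d = [d ! j]" using 3 Cons_nth_drop_Suc[OF j] by simp
    moreover have "length d - j = 1" using 3 by simp
    ultimately have "drop i a = drop r B" "length a - i = length w - r"
      using drop_rest length_rest by (simp_all add: a_def i_def B_def)
    then show ?thesis using bar_prefix wbar_take_le_drop_block[OF w r] by (simp add: B_def)
  qed
qed

end

lemma fundamental_blocks:
  assumes w: "fundamental M w" and d: "fundamental 1 d"
  shows "fundamental M (blocks M w (0 # d))"
proof -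
  define a where "a = blocks M w (0 # d)"
  note dD = fundamental_1D[OF d]
  have w_ne: "w \<noteq> []" using fundamental_not_Nil[OF w] .
  have d_ne: "d \<noteq> []" using fundamental_not_Nil[OF d] .
  have la: "length a = length d * length w" using length_blocks[OF w_ne] by (simp add: a_def)
  have "wbar M (take (length a - i) a) \<le> drop i a \<and> drop i a < take (length a - i) a"
    if i: "1 \<le> i" "i < length a" for i
  proof -
    define j r where "j = i div length w" and "r = i mod length w"
    have i_eq: "i = j * length w + r" and r_lt: "r < length w"
      using w_ne by (simp_all add: j_def r_def)
    have "j * length w < length d * length w" using i(2) la i_eq by linarith
    then have j_lt: "j < length d" by simp
    show ?thesis
    proof (cases "r = 0")
      case True
      then have "1 \<le> j" using i(1) i_eq by (cases j) auto
      then show ?thesis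
        using blocks_boundary_upper_iff[OF w dD(1,3) _ j_lt]
          blocks_boundary_lower_iff[OF w dD(1,3) _ j_lt]
          fundamental_drop_less_take[OF d _ j_lt] fundamental_wbar_take_le_drop[OF d _ j_lt]
          i_eq True
        by (simp add: a_def)
    next
      case False
      then show ?thesis
        using blocks_interior_upper[OF w dD(1) d_ne dD(3,4) _ r_lt j_lt]
          blocks_interior_lower[OF w dD(1) d_ne dD(3,4) _ r_lt j_lt] i_eq
        by (simp add: a_def)
    qed
  qed
  moreover have "2 * 1 \<le> length a"
    unfolding la using dD(2) w_ne by (intro mult_le_mono) (auto simp: Suc_le_eq)
  moreover have "set a \<subseteq> {0..M}"
    using set_blocks w_ne fundamental_set[OF w] fundamental_last_less[OF w] by (simp add: a_def)
  ultimately show ?thesis unfolding fundamental_iff a_def by simp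
qed

lemma fundamental_comp:
  assumes "fundamental M w" "fundamental 1 d"
  shows "fundamental M (comp M w d)"
  using fundamental_blocks[OF assms] comp_eq_blocks fundamental_1D[OF assms(2)]
    fundamental_not_Nil[OF assms(2)] by auto

section \<open>Reverse closure\<close>

lemma binary_obtain_last_before:
  assumes "binary f" "j \<le> length f" "t0 < j" "f ! t0 = x" "x \<le> 1"
  obtains t where "t < j" "f ! t = x" "\<forall>u. t < u \<and> u < j \<longrightarrow> f ! u = 1 - x"
proof -
  obtain t where t: "t < j \<and> f ! t = x" and greatest: "\<forall>u. u < j \<and> f ! u = x \<longrightarrow> u \<le> t"
    using Nat.ex_has_greatest_nat[of "\<lambda>t. t < j \<and> f ! t = x" t0 j] assms(3,4) by auto
  have "f ! u = 1 - x" if "t < u" "u < j" for u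
  proof -
    have "f ! u \<noteq> x" using greatest[rule_format, of u] that by auto
    then show ?thesis using binary_nth_cases[OF assms(1), of u] that assms(2,5) by auto
  qed
  then show ?thesis using t that by blast
qed

lemma drop_eq_replicate_append:
  assumes "s \<le> j" "j \<le> length f" "\<forall>u. s \<le> u \<and> u < j \<longrightarrow> f ! u = x"
  shows "drop s f = replicate (j - s) x @ drop j f"
proof -
  have "take (j - s) (drop s f) = replicate (j - s) x"
    using assms by (intro nth_equalityI) auto
  moreover have "drop (j - s) (drop s f) = drop j f" using assms(1) by simp
  ultimately show ?thesis by (metis append_take_drop_id)
qed

lemma take_eq_take_append_take_drop:
  "s \<le> j \<Longrightarrow> j \<le> length f \<Longrightarrow>
    take (length f - s) f = take (j - s) f @ take (length f - j) (drop (j - s) f)"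
proof -
  assume "s \<le> j" "j \<le> length f"
  then have "length f - s = (j - s) + (length f - j)" by simp
  then show ?thesis by (simp add: take_add)
qed

lemma drop_less_take_if_prefix_ones:
  assumes f: "binary f" "f \<noteq> []" "last f = 0"
    and ones: "\<forall>u<j. f ! u = 1" and j: "1 \<le> j" "j < length f"
  shows "drop j f < take (length f - j) f"
proof -
  have "\<exists>z. z < length f \<and> f ! z = 0"
    using f(2,3) by (intro exI[of _ "length f - 1"]) (simp add: last_conv_nth)
  then obtain z where z: "z < length f" "f ! z = 0" and "\<forall>u<z. \<not> (u < length f \<and> f ! u = 0)"
    unfolding exists_least_iff[of "\<lambda>z. z < length f \<and> f ! z = 0"] by blast
  have first: "\<forall>u<z. f ! u = 1"
  proof (intro allI impI)
    fix u assume "u < z"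
    then show "f ! u = 1"
      using \<open>\<forall>u<z. \<not> (u < length f \<and> f ! u = 0)\<close> z(1) binary_nth_cases[OF f(1), of u] by auto
  qed
  have jz: "j \<le> z" using ones z(2) by (metis not_le zero_neq_one)
  show ?thesis
  proof (rule less_if_nth_less[of _ _ "z - j"])
    show "\<forall>u<z - j. drop j f ! u = take (length f - j) f ! u"
      using first z jz by auto
    show "drop j f ! (z - j) < take (length f - j) f ! (z - j)"
      using first[rule_format, of "z - j"] z jz j by auto
  qed (use z jz in auto)
qed

lemma take_drop_le_take:
  fixes x :: "'a::linorder list"
  assumes "drop k x < take (length x - k) x" "l \<le> length x - k"
  shows "take l (drop k x) \<le> take l x"
proof -
  have "take l (drop k x) \<le> take l (take (length x - k) x)"
    using assms(1) by (intro take_mono_same_length) auto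
  also have "\<dots> = take l x" using assms(2) by (simp add: min_def)
  finally show ?thesis .
qed

lemma drop_less_take_split_run_1:
  assumes f: "binary f" and s: "s < j" "j \<le> length f"
    and run: "\<forall>u. s \<le> u \<and> u < j \<longrightarrow> f ! u = 1"
    and less: "drop s f < take (length f - s) f"
  shows "take (j - s) f = replicate (j - s) 1"
    and "drop j f < take (length f - j) (drop (j - s) f)"
proof -
  have len: "length (replicate (j - s) (1::nat)) = length (take (j - s) f)" using s by simp
  have "replicate (j - s) 1 @ drop j f < take (j - s) f @ take (length f - j) (drop (j - s) f)"
    using less drop_eq_replicate_append[of s j f 1] take_eq_take_append_take_drop[of s j f] run s
    by simp
  then have "replicate (j - s) 1 < take (j - s) f \<or>
      replicate (j - s) 1 = take (j - s) f \<and> drop j f < take (length f - j) (drop (j - s) f)"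
    unfolding append_less_append_iff[OF len] .
  moreover have "\<not> replicate (j - s) 1 < take (j - s) f"
    using not_replicate_max_less[of "take (j - s) f" 1] binary_take[OF f] s by (simp add: binary_def)
  ultimately show "take (j - s) f = replicate (j - s) 1"
    and "drop j f < take (length f - j) (drop (j - s) f)" by auto
qed

lemma wbar_take_le_drop_split_run_0:
  assumes f: "binary f" and s: "s < j" "j \<le> length f"
    and run: "\<forall>u. s \<le> u \<and> u < j \<longrightarrow> f ! u = 0"
    and le: "wbar 1 (take (length f - s) f) \<le> drop s f"
  shows "take (j - s) f = replicate (j - s) 1"
    and "wbar 1 (take (length f - j) (drop (j - s) f)) \<le> drop j f"
proof -
  have len: "length (wbar 1 (take (j - s) f)) = length (replicate (j - s) (0::nat))" using s by simp
  have "wbar 1 (take (j - s) f) @ wbar 1 (take (length f - j) (drop (j - s) f)) \<le>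
      replicate (j - s) 0 @ drop j f"
    using le drop_eq_replicate_append[of s j f 0] take_eq_take_append_take_drop[of s j f] run s
    by simp
  then have "wbar 1 (take (j - s) f) < replicate (j - s) 0 \<or>
      wbar 1 (take (j - s) f) = replicate (j - s) 0 \<and>
      wbar 1 (take (length f - j) (drop (j - s) f)) \<le> drop j f"
    unfolding append_le_append_iff[OF len] .
  moreover have "\<not> wbar 1 (take (j - s) f) < replicate (j - s) 0"
    using not_less_replicate_0[of "wbar 1 (take (j - s) f)"] s by simp
  ultimately have "wbar 1 (take (j - s) f) = replicate (j - s) 0"
    and "wbar 1 (take (length f - j) (drop (j - s) f)) \<le> drop j f" by auto
  moreover have "wbar 1 (wbar 1 (take (j - s) f)) = take (j - s) f"
    using binary_take[OF f] by (intro wbar_wbar) (simp add: binary_def)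
  ultimately show "take (j - s) f = replicate (j - s) 1"
    and "wbar 1 (take (length f - j) (drop (j - s) f)) \<le> drop j f" by (auto simp: wbar_def)
qed

context
  fixes f :: "nat list"
  assumes f: "binary f" "hd f = 1" "last f = 0" "2 \<le> length f"
begin

private lemma f_ne: "f \<noteq> []"
  using f(4) by auto

text \<open>For binary words half of the fundamental inequalities suffice: the missing one at \<open>j\<close>
  follows from the given one at the start \<open>s\<close> of the maximal run of equal letters ending at
  \<open>j - 1\<close>, together with the inequality at \<open>j - s\<close>.\<close>

lemma drop_less_take_after_1:
  assumes upper0: "\<And>j. 1 \<le> j \<Longrightarrow> j < length f \<Longrightarrow> f ! (j - 1) = 0 \<Longrightarrow>
      drop j f < take (length f - j) f"
  shows "1 \<le> j \<Longrightarrow> j < length f \<Longrightarrow> f ! (j - 1) = 1 \<Longrightarrow> drop j f < take (length f - j) f"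
proof (induction j rule: less_induct)
  case (less j)
  show ?case
  proof (cases "\<exists>t < j. f ! t = 0")
    case False
    have "f ! u = 1" if "u < j" for u
      using False that binary_nth_cases[OF f(1), of u] less.prems(2) by auto
    then have "\<forall>u<j. f ! u = 1" by blast
    then show ?thesis using drop_less_take_if_prefix_ones[OF f(1) f_ne f(3)] less.prems by blast
  next
    case True
    then obtain t where t: "t < j" "f ! t = 0" and run: "\<forall>u. t < u \<and> u < j \<longrightarrow> f ! u = 1"
      using binary_obtain_last_before[OF f(1), of j _ 0] less.prems(2) by auto
    define s where "s = Suc t"
    have "t \<noteq> j - 1" using t(2) less.prems(3) by auto
    then have s: "1 \<le> s" "s < j" using t(1) by (simp_all add: s_def)
    have "drop s f < take (length f - s) f"
      using upper0[of s] s t less.prems(2) by (simp add: s_def)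
    then have prefix: "take (j - s) f = replicate (j - s) 1"
      and rest: "drop j f < take (length f - j) (drop (j - s) f)"
      using drop_less_take_split_run_1[OF f(1) s(2)] run less.prems(2) by (auto simp: s_def)
    have "f ! (j - s - 1) = 1" using arg_cong[OF prefix, of "\<lambda>x. x ! (j - s - 1)"] s by simp
    then have "drop (j - s) f < take (length f - (j - s)) f"
      using less.IH[of "j - s"] s less.prems(2) by simp
    then have "take (length f - j) (drop (j - s) f) \<le> take (length f - j) f"
      using take_drop_le_take[of "j - s" f "length f - j"] s by simp
    with rest show ?thesis by (rule less_le_trans)
  qed
qed

lemma wbar_take_le_drop_after_0:
  assumes lower1: "\<And>j. 1 \<le> j \<Longrightarrow> j < length f \<Longrightarrow> f ! (j - 1) = 1 \<Longrightarrow>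
      wbar 1 (take (length f - j) f) \<le> drop j f"
    and upper: "\<And>j. 1 \<le> j \<Longrightarrow> j < length f \<Longrightarrow> drop j f < take (length f - j) f"
    and j: "1 \<le> j" "j < length f" "f ! (j - 1) = 0"
  shows "wbar 1 (take (length f - j) f) \<le> drop j f"
proof -
  have "f ! 0 = 1" using f(2) f_ne by (simp add: hd_conv_nth)
  then have "0 < j - 1" using j(3) by (cases "j - 1") auto
  then obtain t where t: "t < j" "f ! t = 1" and run: "\<forall>u. t < u \<and> u < j \<longrightarrow> f ! u = 0"
    using binary_obtain_last_before[OF f(1), of j 0 1] \<open>f ! 0 = 1\<close> j(2) by auto
  define s where "s = Suc t"
  have "t \<noteq> j - 1" using t(2) j(3) by auto
  then have s: "1 \<le> s" "s < j" using t(1) by (simp_all add: s_def)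
  have "wbar 1 (take (length f - s) f) \<le> drop s f" using lower1[of s] s t j(2) by (simp add: s_def)
  then have prefix: "take (j - s) f = replicate (j - s) 1"
    and rest: "wbar 1 (take (length f - j) (drop (j - s) f)) \<le> drop j f"
    using wbar_take_le_drop_split_run_0[OF f(1) s(2)] run j(2) by (auto simp: s_def)
  have "f ! (j - s - 1) = 1" using arg_cong[OF prefix, of "\<lambda>x. x ! (j - s - 1)"] s by simp
  then have "drop (j - s) f < take (length f - (j - s)) f"
    using upper[of "j - s"] s j(2) by simp
  then have "take (length f - j) (drop (j - s) f) \<le> take (length f - j) f"
    using take_drop_le_take[of "j - s" f "length f - j"] s by simp
  then have "wbar 1 (take (length f - j) f) \<le> wbar 1 (take (length f - j) (drop (j - s) f))"
    using binary_take[OF f(1)] binary_take[OF binary_drop[OF f(1)]] s j(2)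
    by (subst wbar_le_wbar_iff) (auto simp: binary_def)
  then show ?thesis using rest by simp
qed

lemma binary_fundamentalI:
  assumes upper0: "\<And>j. 1 \<le> j \<Longrightarrow> j < length f \<Longrightarrow> f ! (j - 1) = 0 \<Longrightarrow>
      drop j f < take (length f - j) f"
    and lower1: "\<And>j. 1 \<le> j \<Longrightarrow> j < length f \<Longrightarrow> f ! (j - 1) = 1 \<Longrightarrow>
      wbar 1 (take (length f - j) f) \<le> drop j f"
  shows "fundamental 1 f"
proof -
  have upper: "drop j f < take (length f - j) f" if j: "1 \<le> j" "j < length f" for j
  proof -
    have "f ! (j - 1) = 0 \<or> f ! (j - 1) = 1" using binary_nth_cases[OF f(1), of "j - 1"] j by simp
    then show ?thesis using upper0[OF j] drop_less_take_after_1[OF upper0 j] by blast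
  qed
  have lower: "wbar 1 (take (length f - j) f) \<le> drop j f" if j: "1 \<le> j" "j < length f" for j
  proof -
    have "f ! (j - 1) = 0 \<or> f ! (j - 1) = 1" using binary_nth_cases[OF f(1), of "j - 1"] j by simp
    then show ?thesis using lower1[OF j] wbar_take_le_drop_after_0[OF lower1 upper j] by blast
  qed
  show ?thesis using upper lower f(1,4) by (auto simp: fundamental_iff binary_def)
qed

end

lemma fundamental_1_if_fundamental_blocks:
  assumes w: "fundamental M w" and f: "binary f" "hd f = 1" "last f = 0" "2 \<le> length f"
    and a: "fundamental M (blocks M w (0 # f))"
  shows "fundamental 1 f"
proof (rule binary_fundamentalI[OF f])
  fix j assume j: "1 \<le> j" "j < length f"
  have w_ne: "w \<noteq> []" using fundamental_not_Nil[OF w] .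
  have "1 * 1 \<le> j * length w" using j w_ne by (intro mult_le_mono) (auto simp: Suc_le_eq)
  moreover have "j * length w < length (blocks M w (0 # f))"
    using j w_ne length_blocks[OF w_ne, of M "0 # f"] by (simp add: mult.commute)
  ultimately have i: "1 \<le> j * length w" "j * length w < length (blocks M w (0 # f))" by simp_all
  note upper = fundamental_drop_less_take[OF a i] blocks_boundary_upper_iff[OF w f(1,2) j]
  note lower = fundamental_wbar_take_le_drop[OF a i] blocks_boundary_lower_iff[OF w f(1,2) j]
  show "f ! (j - 1) = 0 \<Longrightarrow> drop j f < take (length f - j) f" using upper by simp
  show "f ! (j - 1) = 1 \<Longrightarrow> wbar 1 (take (length f - j) f) \<le> drop j f" using lower by simp
qed

section \<open>Two factorizations of the same word\<close>

lemma length_comp: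
  assumes "fundamental M c" "fundamental 1 d"
  shows "length (comp M c d) = length c * length d"
  using comp_eq_blocks[of d M c] fundamental_1D[OF assms(2)] fundamental_not_Nil[OF assms(2)]
    length_blocks[OF fundamental_not_Nil[OF assms(1)], of M "0 # d"] by simp

lemma take_length_comp:
  assumes "fundamental M c" "fundamental 1 d"
  shows "take (length c) (comp M c d) = wplus c"
  using comp_eq_blocks[of d M c] fundamental_1D[OF assms(2)] fundamental_not_Nil[OF assms(2)]
    blocks_0_Cons[of c d M] fundamental_not_Nil[OF assms(1)] by simp

lemma take_drop_length_comp:
  assumes c: "fundamental M c" and d: "fundamental 1 d" and k: "k < length c"
  shows "take k (drop (length c) (comp M c d)) = wbar M (take k c)"
proof -
  note dD = fundamental_1D[OF d]
  obtain b r where d_eq: "d = 1 # b # r" using dD(2,3) by (cases d; cases "tl d") auto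
  have "comp M c d = wplus c @ block M c 1 b @ blocks M c (b # r)"
    using comp_eq_blocks[OF dD(1) fundamental_not_Nil[OF d] dD(3)] d_eq by (simp add: block_def)
  then show ?thesis using take_block[OF k] fundamental_not_Nil[OF c] k by simp
qed

lemma take_drop_blocks_ne_wbar_wplus:
  assumes w: "fundamental M w" and D: "binary D"
    and r: "0 < r" "r < length w" and j: "j + 2 < length D"
  shows "take (length w) (drop (j * length w + r) (blocks M w D)) \<noteq> wbar M (wplus w)"
proof
  define B N where "B = block M w (D ! j) (D ! (j + 1))"
    and "N = block M w (D ! (j + 1)) (D ! (j + 2))"
  assume "take (length w) (drop (j * length w + r) (blocks M w D)) = wbar M (wplus w)"
  then have "drop r B @ take r N =
      wbar M (take (length w - r) w) @ wbar M (wplus (drop (length w - r) w))"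
    using take_drop_blocks_interior[OF fundamental_not_Nil[OF w] r(2) j]
      wplus_eq_take_append_wplus_drop[of "length w - r" w] r by (simp add: B_def N_def)
  moreover have "length (drop r B) = length (wbar M (take (length w - r) w))"
    using fundamental_not_Nil[OF w] by (simp add: B_def)
  ultimately have "drop r B = wbar M (take (length w - r) w)"
    and "take r N = wbar M (wplus (drop (length w - r) w))" by auto
  moreover have "D ! (j + 1) = 0 \<or> D ! (j + 1) = 1" using binary_nth_cases[OF D] j by simp
  ultimately show False
  proof (elim conjE disjE)
    assume "take r N = wbar M (wplus (drop (length w - r) w))" "D ! (j + 1) = 0"
    then show False using wbar_wplus_drop_less_take[OF w r] take_block[OF r(2)] by (simp add: N_def)
  next
    assume "drop r B = wbar M (take (length w - r) w)" "D ! (j + 1) = 1"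
    then show False using wbar_take_less_drop_block_1[OF w r, of "D ! j"] by (simp add: B_def)
  qed
qed

lemma wbar_wplus_occurs_aligned:
  assumes w: "fundamental M w" and D: "binary D"
    and occ: "take (length w) (drop p (blocks M w D)) = wbar M (wplus w)"
  shows "p mod length w = 0" "p div length w + 1 < length D" "D ! (p div length w) = 1"
proof -
  define j r where "j = p div length w" and "r = p mod length w"
  have w_ne: "w \<noteq> []" using fundamental_not_Nil[OF w] .
  have p_eq: "p = j * length w + r" and r: "r < length w" using w_ne by (simp_all add: j_def r_def)
  have "length w \<le> length (blocks M w D) - p" using arg_cong[OF occ, of length] w_ne by simp
  moreover have "0 < length w" using w_ne by simp
  ultimately have "p + length w \<le> length (blocks M w D)" by linarith
  then have "p + length w \<le> length w * (length D - 1)" using length_blocks[OF w_ne, of M D] by simp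
  then have fits: "(j + 1) * length w + r \<le> (length D - 1) * length w"
    using p_eq by (simp add: mult.commute)
  show r0: "p mod length w = 0"
  proof (rule ccontr)
    assume "p mod length w \<noteq> 0"
    then have "0 < r" by (simp add: r_def)
    then have "(j + 1) * length w < (length D - 1) * length w" using fits by simp
    then have "j + 1 < length D - 1" using mult_less_cancel2 by blast
    then have "j + 2 < length D" by linarith
    then have "take (length w) (drop (j * length w + r) (blocks M w D)) \<noteq> wbar M (wplus w)"
      by (rule take_drop_blocks_ne_wbar_wplus[OF w D \<open>0 < r\<close> r])
    then show False using occ unfolding p_eq by blast
  qed
  then have "r = 0" by (simp add: r_def)
  then have p_eq': "p = j * length w" using p_eq by simp
  then have "(j + 1) * length w \<le> (length D - 1) * length w" using fits by simp
  then have "j + 1 \<le> length D - 1" using w_ne mult_le_cancel2[of "j + 1" "length w"] by simp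
  then have j_lt: "j + 1 < length D" by linarith
  then show "p div length w + 1 < length D" by (simp add: j_def)
  have "take (length w) (drop p (blocks M w D)) = block M w (D ! j) (D ! (j + 1))"
    using drop_blocks[OF w_ne, of j M D] blocks_drop_eq[of j D M w] j_lt p_eq' w_ne by simp
  then have "block M w (D ! j) (D ! (j + 1)) = wbar M (wplus w)" using occ by simp
  then have "D ! j \<noteq> 0"
    using hd_wbar_wplus_less_hd_block_0[OF w, of "D ! (j + 1)"] hd_wbar[OF wplus_not_Nil, of M w]
    by (metis less_irrefl)
  then show "D ! (p div length w) = 1" using binary_nth_cases[OF D, of j] j_lt by (simp add: j_def)
qed

lemma comp_factor_if_comp_eq_comp:
  assumes w: "fundamental M w" and d: "fundamental 1 d"
    and c: "fundamental M c" and e: "fundamental 1 e"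
    and eq: "comp M w d = comp M c e" and lt: "length w < length c"
  obtains f where "fundamental 1 f" "c = comp M w f"
proof -
  note dD = fundamental_1D[OF d]
  have w_ne: "w \<noteq> []" and d_ne: "d \<noteq> []" using fundamental_not_Nil w d by blast+
  have blocks_eq: "comp M w d = blocks M w (0 # d)" using comp_eq_blocks[OF dD(1) d_ne dD(3)] .
  have "take (length w) c = take (length w) (take (length c) (comp M c e))"
    using take_length_comp[OF c e] take_wplus[OF lt] by simp
  also have "\<dots> = wplus w" using take_length_comp[OF w d] eq[symmetric] lt by (simp add: min_def)
  finally have "take (length w) (drop (length c) (blocks M w (0 # d))) = wbar M (wplus w)"
    using take_drop_length_comp[OF c e lt] eq blocks_eq by simp
  note aligned = wbar_wplus_occurs_aligned[OF w _ this, simplified dD(1) binary_Cons]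
  define j where "j = length c div length w"
  have p_eq: "length c = j * length w"
    using aligned(1) div_mult_mod_eq[of "length c" "length w"] by (simp add: j_def)
  have "1 * length w < j * length w" using lt p_eq by simp
  then have "2 \<le> j" by simp
  moreover have "j \<le> length d" using aligned(2) by (simp add: j_def)
  moreover have "d ! (j - 1) = 1" using aligned(3) \<open>2 \<le> j\<close> by (cases j) (simp_all add: j_def)
  ultimately have j: "2 \<le> j" "j \<le> length d" "d ! (j - 1) = 1" by blast+
  \<comment> \<open>The first \<open>j\<close> blocks form \<open>c\<^sup>+\<close>; lowering the last letter of \<open>0 # take j d\<close>
    from \<open>1\<close> to \<open>0\<close> turns them into \<open>c\<close>.\<close>
  define f where "f = take (j - 1) d @ [0]"
  have f: "binary f" "hd f = 1" "last f = 0" "length f = j"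
    using j dD(1,3) d_ne binary_take[OF dD(1)] by (auto simp: f_def hd_append hd_take)
  have "take j d = take (j - 1) d @ [1]"
    using j take_Suc_conv_app_nth[of "j - 1" d] by (simp add: Suc_diff_1)
  then have "wplus c = wplus (blocks M w (0 # f))"
    using take_length_comp[OF c e] eq blocks_eq take_blocks[OF w_ne, of j M "0 # d"] p_eq
      wplus_blocks[OF w_ne fundamental_last_less[OF w], of 0 "take (j - 1) d"] by (simp add: f_def)
  then have c_eq: "c = blocks M w (0 # f)"
    using wplus_inj[of c] length_blocks[OF w_ne, of M "0 # f"] f(4) p_eq fundamental_not_Nil[OF c]
    by (simp add: mult.commute)
  then have "fundamental 1 f"
    using fundamental_1_if_fundamental_blocks[OF w f(1-3)] c j f(4) by simp
  moreover have "f \<noteq> []" using f(4) j(1) by auto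
  ultimately show thesis using that c_eq comp_eq_blocks[OF f(1) _ f(2)] by auto
qed

section \<open>Associativity of composition\<close>

lemma block_blocks:
  assumes w: "w \<noteq> []" "set w \<subseteq> {0..M}" "last w < M"
    and x: "binary x" "x \<noteq> []" "last x = 0"
    and sb: "s \<le> 1" "b \<le> 1"
  shows "block M (blocks M w (0 # x)) s b = blocks M w (s # block 1 x s b)"
proof -
  obtain x' where x': "x = x' @ [0]" using x(2,3) by (cases x rule: rev_cases) auto
  have wplus_x: "binary (0 # wplus x)" "wplus (blocks M w (0 # x)) = blocks M w (0 # wplus x)"
    using x(1) wplus_blocks[OF w(1,3), of 0 x'] x' by simp_all
  have "s = 0 \<or> s = 1" "b = 0 \<or> b = 1" using sb by auto
  then show ?thesis
    using wplus_x wbar_blocks[OF w wplus_x(1)] wbar_blocks[OF w, of "0 # x"] x(1)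
    by (auto simp: block_def)
qed

lemma blocks_blocks:
  assumes w: "w \<noteq> []" "set w \<subseteq> {0..M}" "last w < M"
    and x: "binary x" "x \<noteq> []" "last x = 0"
  shows "binary (s # y) \<Longrightarrow>
    blocks M (blocks M w (0 # x)) (s # y) = blocks M w (s # blocks 1 x (s # y))"
proof (induction y arbitrary: s)
  case (Cons b y)
  have sb: "s \<le> 1" "b \<le> 1" using Cons.prems by auto
  have last_block: "last (block 1 x s b) = b"
    using x sb last_wplus[OF x(2)] wplus_not_Nil[of x] by (auto simp: block_def wbar_def last_map)
  have "blocks M (blocks M w (0 # x)) (s # b # y) =
      blocks M w (s # block 1 x s b) @ blocks M w (b # blocks 1 x (b # y))"
    using block_blocks[OF w x sb] Cons by simp
  also have "\<dots> = blocks M w (s # block 1 x s b @ blocks 1 x (b # y))"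
    using blocks_Cons_append[of "block 1 x s b" M w s "blocks 1 x (b # y)"] last_block x(2) by simp
  finally show ?case by simp
qed simp

lemma comp_assoc:
  assumes c: "fundamental M c" and x: "fundamental 1 x" and y: "fundamental 1 y"
  shows "comp M (comp M c x) y = comp M c (comp 1 x y)"
proof -
  have c': "c \<noteq> []" "set c \<subseteq> {0..M}" "last c < M"
    using c fundamental_not_Nil fundamental_set fundamental_last_less by blast+
  have x': "binary x" "x \<noteq> []" "hd x = 1" "last x = 0"
    using fundamental_1D[OF x] fundamental_not_Nil[OF x] by blast+
  have y': "binary y" "y \<noteq> []" "hd y = 1"
    using fundamental_1D[OF y] fundamental_not_Nil[OF y] by blast+
  have xy: "fundamental 1 (comp 1 x y)" using fundamental_comp[OF x y] .
  have "comp M (comp M c x) y = blocks M (blocks M c (0 # x)) (0 # y)"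
    using comp_eq_blocks[OF x'(1-3)] comp_eq_blocks[OF y'] by simp
  also have "\<dots> = blocks M c (0 # blocks 1 x (0 # y))"
    using blocks_blocks[OF c' x'(1,2,4), of 0 y] y'(1) by simp
  also have "\<dots> = comp M c (comp 1 x y)"
    using comp_eq_blocks[OF y', of 1 x] comp_eq_blocks[of "comp 1 x y" M c]
      fundamental_1D[OF xy] fundamental_not_Nil[OF xy] by simp
  finally show ?thesis .
qed

lemma fundamental_foldl_comp:
  "fundamental M c \<Longrightarrow> \<forall>t\<in>set ts. fundamental 1 t \<Longrightarrow> fundamental M (foldl (comp M) c ts)"
  by (induction ts arbitrary: c) (simp_all add: fundamental_comp)

lemma foldl_comp_comp:
  "fundamental M c \<Longrightarrow> fundamental 1 t \<Longrightarrow> \<forall>s\<in>set ts. fundamental 1 s \<Longrightarrow>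
    foldl (comp M) (comp M c t) ts = comp M c (foldl (comp 1) t ts)"
proof (induction ts arbitrary: t)
  case (Cons s ts)
  then show ?case using comp_assoc[of M c t s] fundamental_comp[of 1 t s] by simp
qed simp

lemma comp_cancel_left:
  assumes c: "fundamental M c" and d: "fundamental 1 d" "fundamental 1 d'"
    and eq: "comp M c d = comp M c d'"
  shows "d = d'"
proof -
  have c': "c \<noteq> []" "set c \<subseteq> {0..M}" "last c < M"
    using c fundamental_not_Nil fundamental_set fundamental_last_less by blast+
  have "length c * length d = length c * length d'"
    by (simp only: length_comp[OF c d(1), symmetric] length_comp[OF c d(2), symmetric] eq)
  then have "length d = length d'" using c'(1) by simp
  moreover have "blocks M c (0 # d) = blocks M c (0 # d')"
    using eq comp_eq_blocks fundamental_1D[OF d(1)] fundamental_1D[OF d(2)] fundamental_not_Nil d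
    by metis
  ultimately show ?thesis
    using blocks_eq_blocks_iff[OF c'] fundamental_1D[OF d(1)] fundamental_1D[OF d(2)] by blast
qed

section \<open>Decomposition into irreducible words\<close>

definition irreducible_decomposition :: "nat \<Rightarrow> nat list \<Rightarrow> nat list list \<Rightarrow> bool" where
  "irreducible_decomposition M a cs \<longleftrightarrow> cs \<noteq> [] \<and>
     fundamental M (hd cs) \<and>
     (\<forall>c\<in>set (tl cs). fundamental 1 c) \<and>
     irreducible_word M (hd cs) \<and>
     (\<forall>c\<in>set (tl cs). irreducible_word 1 c) \<and>
     a = comp_iter M (hd cs) (tl cs)"

lemma irreducible_decomposition_single:
  "irreducible_decomposition M a [c] \<longleftrightarrow> irreducible_word M c \<and> a = c"
  by (auto simp: irreducible_decomposition_def irreducible_word_def comp_iter_def)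

lemma irreducible_decomposition_Cons_Cons:
  "irreducible_decomposition M a (c # t # T) \<longleftrightarrow>
    irreducible_word M c \<and> irreducible_decomposition 1 (comp_iter 1 t T) (t # T) \<and>
    a = comp M c (comp_iter 1 t T)"
proof -
  have "comp_iter M c (t # T) = comp M c (comp_iter 1 t T)"
    if "fundamental M c" "\<forall>s\<in>set (t # T). fundamental 1 s"
    using foldl_comp_comp[of M c t T] that by (simp add: comp_iter_def)
  then show ?thesis
    by (auto simp: irreducible_decomposition_def irreducible_word_def)
qed

lemma fundamental_if_irreducible_decomposition:
  "irreducible_decomposition M a cs \<Longrightarrow> fundamental M a"
  by (auto simp: irreducible_decomposition_def comp_iter_def intro: fundamental_foldl_comp)

lemma irreducible_decomposition_comp:
  assumes cs: "irreducible_decomposition M c cs" and ds: "irreducible_decomposition 1 d ds"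
  shows "irreducible_decomposition M (comp M c d) (cs @ ds)"
proof -
  obtain t T where ds_eq: "ds = t # T"
    using ds by (cases ds) (auto simp: irreducible_decomposition_def)
  have "comp_iter M (hd cs) (tl cs @ ds) = foldl (comp M) c (t # T)"
    using cs ds_eq by (auto simp: irreducible_decomposition_def comp_iter_def)
  also have "\<dots> = comp M c d"
    using foldl_comp_comp[of M c t T] fundamental_if_irreducible_decomposition[OF cs] ds ds_eq
    by (auto simp: irreducible_decomposition_def comp_iter_def)
  finally show ?thesis using cs ds ds_eq by (auto simp: irreducible_decomposition_def)
qed

lemma irreducible_comp_eq_comp_imp_eq:
  assumes c: "irreducible_word M c" "fundamental 1 d"
    and c': "irreducible_word M c'" "fundamental 1 d'"
    and eq: "comp M c d = comp M c' d'"
  shows "c = c' \<and> d = d'"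
proof -
  have fc: "fundamental M c" "fundamental M c'" using c c' by (simp_all add: irreducible_word_def)
  have "\<not> length c < length c'"
    using comp_factor_if_comp_eq_comp[OF fc(1) c(2) fc(2) c'(2) eq] c' fc(1)
    by (auto simp: irreducible_word_def)
  moreover have "\<not> length c' < length c"
    using comp_factor_if_comp_eq_comp[OF fc(2) c'(2) fc(1) c(2) eq[symmetric]] c fc(2)
    by (auto simp: irreducible_word_def)
  ultimately have len: "length c = length c'" by simp
  then have "wplus c = wplus c'"
    using take_length_comp[OF fc(1) c(2)] take_length_comp[OF fc(2) c'(2)] eq by simp
  then have "c = c'" using wplus_inj[OF len fundamental_not_Nil[OF fc(1)]] by blast
  then show ?thesis using comp_cancel_left[OF fc(1) c(2) c'(2)] eq by simp
qed

text \<open>In \<open>a = c \<circ> d\<close> the factor \<open>d \<in> \<A>\<^sub>1\<close> is as long as \<open>a\<close> when \<open>|c| = 1\<close>,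
  which can only happen for \<open>M \<noteq> 1\<close>; the extra unit makes both factors strictly smaller.\<close>

definition decomposition_size :: "nat \<Rightarrow> nat list \<Rightarrow> nat" where
  "decomposition_size M a = 2 * length a + (if M = 1 then 0 else 1)"

lemma decomposition_size_comp:
  assumes "fundamental M c" "fundamental 1 d"
  shows "decomposition_size M c < decomposition_size M (comp M c d)"
    and "decomposition_size 1 d < decomposition_size M (comp M c d)"
proof -
  have len: "length (comp M c d) = length c * length d" using length_comp[OF assms] .
  have c: "1 \<le> length c" using fundamental_not_Nil[OF assms(1)] by (cases c) auto
  have d: "2 \<le> length d" using fundamental_1D(2)[OF assms(2)] .
  have "length c * 2 \<le> length c * length d" using d by (rule mult_le_mono2)
  then show "decomposition_size M c < decomposition_size M (comp M c d)"
    using len c d fundamental_not_Nil[OF assms(1)] by (simp add: decomposition_size_def)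
  have le: "2 * length d \<le> 2 * length (comp M c d)" using len c by simp
  have "M = 1 \<Longrightarrow> 2 \<le> length c" using fundamental_1D(2) assms(1) by simp
  then have "M = 1 \<Longrightarrow> 2 * length d \<le> length (comp M c d)" using len by (simp add: mult_le_mono1)
  then show "decomposition_size 1 d < decomposition_size M (comp M c d)"
    using le d by (cases "M = 1") (auto simp: decomposition_size_def)
qed

lemma irreducible_decomposition_exists:
  "fundamental M a \<Longrightarrow> \<exists>cs. irreducible_decomposition M a cs"
proof (induction "decomposition_size M a" arbitrary: M a rule: less_induct)
  case less
  show ?case
  proof (cases "irreducible_word M a")
    case True
    then show ?thesis using irreducible_decomposition_single by blast
  next
    case False
    then obtain c d where cd: "fundamental M c" "fundamental 1 d" and a: "a = comp M c d"
      using less.prems by (auto simp: irreducible_word_def)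
    obtain cs where "irreducible_decomposition M c cs"
      using less.hyps[OF _ cd(1)] decomposition_size_comp(1)[OF cd] a by blast
    moreover obtain ds where "irreducible_decomposition 1 d ds"
      using less.hyps[OF _ cd(2)] decomposition_size_comp(2)[OF cd] a by fastforce
    ultimately show ?thesis using irreducible_decomposition_comp a by blast
  qed
qed

lemma irreducible_decomposition_single_Cons_Cons:
  "irreducible_decomposition M a [c] \<Longrightarrow> \<not> irreducible_decomposition M a (c' # t # T)"
  using fundamental_if_irreducible_decomposition[of 1 "comp_iter 1 t T" "t # T"]
  by (auto simp: irreducible_decomposition_single irreducible_decomposition_Cons_Cons
      irreducible_word_def)

lemma irreducible_decomposition_unique:
  "irreducible_decomposition M a cs \<Longrightarrow> irreducible_decomposition M a cs' \<Longrightarrow> cs = cs'"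
proof (induction "decomposition_size M a" arbitrary: M a cs cs' rule: less_induct)
  case less
  consider c c' where "cs = [c]" "cs' = [c']"
    | c t T c' t' T' where "cs = c # t # T" "cs' = c' # t' # T'"
  proof -
    have "cs \<noteq> []" "cs' \<noteq> []" using less.prems by (simp_all add: irreducible_decomposition_def)
    then show thesis using that less.prems
      by (cases cs rule: remdups_adj.cases; cases cs' rule: remdups_adj.cases)
        (auto dest: irreducible_decomposition_single_Cons_Cons)
  qed
  then show ?case
  proof cases
    case 1
    then show ?thesis using less.prems by (simp add: irreducible_decomposition_single)
  next
    case (2 c t T c' t' T')
    define D D' where "D = comp_iter 1 t T" and "D' = comp_iter 1 t' T'"
    have dec: "irreducible_word M c" "irreducible_decomposition 1 D (t # T)" "a = comp M c D"
      "irreducible_word M c'" "irreducible_decomposition 1 D' (t' # T')" "a = comp M c' D'"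
      using less.prems 2 by (simp_all add: irreducible_decomposition_Cons_Cons D_def D'_def)
    note fD = fundamental_if_irreducible_decomposition[OF dec(2)]
      fundamental_if_irreducible_decomposition[OF dec(5)]
    have "c = c'" "D = D'"
      using irreducible_comp_eq_comp_imp_eq[OF dec(1) fD(1) dec(4) fD(2)] dec(3,6) by simp_all
    moreover have "t # T = t' # T'"
      using less.hyps[of 1 D "t # T" "t' # T'"] decomposition_size_comp(2)[of M c D] dec fD(1)
        \<open>D = D'\<close> by (simp add: irreducible_word_def)
    ultimately show ?thesis using 2 by simp
  qed
qed

theorem proposition2p17:
  fixes M :: nat and a :: "nat list"
  assumes "1 \<le> M" and "fundamental M a"
  shows "\<exists>!cs. cs \<noteq> [] \<and>
           fundamental M (hd cs) \<and>
           (\<forall>c\<in>set (tl cs). fundamental 1 c) \<and>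
           irreducible_word M (hd cs) \<and>
           (\<forall>c\<in>set (tl cs). irreducible_word 1 c) \<and>
           a = comp_iter M (hd cs) (tl cs)"
  using irreducible_decomposition_exists[OF assms(2)] irreducible_decomposition_unique
  unfolding irreducible_decomposition_def[symmetric] by blast

end
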